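(* Let $r>0$, let $\widehat\mu:[0,\infty)\to\mathbb R$ and $\sigma:[0,\infty)\to(0,\infty)$ be globally Lipschitz continuous, and suppose there are constants $\kappa>0$ and $c>0$ such that $x\mapsto\widehat\mu(x)-(r-c)x$ is strictly decreasing on $[\kappa,\infty)$. Let $\widehat\psi\in C^2[0,\infty)$ be the increasing solution of $$\frac{\sigma^2(x)}{2}\widehat\psi''(x)+\widehat\mu(x)\widehat\psi'(x)=r\widehat\psi(x),\qquad\widehat\psi'(0)=1,\ \widehat\psi(0)=0.$$ Then: (I) $\widehat\psi'(x)>0$ for all $x\ge0$. (II) There exists a unique point $b_1\in[\kappa,\infty)$ such that $\widehat\psi''(x)<0$ for $x\in(\kappa,b_1)$ and $\widehat\psi''(x)>0$ for $x\in(b_1,\infty)$. (III) $\dfrac{n}{\widehat\psi(n)}\to0$ as $n\to\infty$. *)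

theory Defs
  imports "HOL-Analysis.Analysis"
begin

end

theory Submission
  imports Defs
begin

(*
  \<psi>' cannot vanish: at its first zero x0 the function \<psi> is already positive, so the
  equation forces \<psi>''(x0) > 0, which is incompatible with \<psi>' decreasing to 0 from the left.

  Given \<psi>' > 0, the equation says that \<psi>'' has the sign of detrended_ratio - detrended_drift,
  where detrended_ratio x = r \<psi>(x) / \<psi>'(x) - (r - c) x and detrended_drift x = \<mu>(x) - (r - c) x.
  On [\<kappa>, \<infinity>) the drift part is strictly decreasing, while the ratio part has derivative
  c - r \<psi> \<psi>'' / \<psi>'^2 >= c wherever \<psi>'' <= 0. Hence the ratio overtakes the drift at some
  b1 >= \<kappa> and stays above it afterwards.

  Beyond b1, \<psi>' is increasing. If it were bounded, \<psi>/\<psi>' would grow almost like x, so the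
  difference above would grow linearly; since \<sigma> grows at most linearly, \<psi>'' >= D/x, and then
  \<psi>' >= D ln x - C is unbounded after all. So \<psi>' tends to infinity, and x / \<psi>(x) tends
  to 0 by l'Hopital's rule.
*)

lemma ge_linear_if_deriv_ge:
  fixes f f' :: "real \<Rightarrow> real"
  assumes "a \<le> b"
    and deriv: "\<And>x. a \<le> x \<Longrightarrow> x \<le> b \<Longrightarrow> (f has_real_derivative f' x) (at x)"
    and bound: "\<And>x. a < x \<Longrightarrow> x < b \<Longrightarrow> m \<le> f' x"
  shows "f a + m * (b - a) \<le> f b"
proof -
  have "f a - m * a \<le> f b - m * b"
  proof (rule DERIV_nonneg_imp_increasing_open[OF \<open>a \<le> b\<close>])
    fix x assume "a < x" "x < b"
    then show "\<exists>y. ((\<lambda>x. f x - m * x) has_real_derivative y) (at x) \<and> 0 \<le> y"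
      using deriv bound by (intro exI[of _ "f' x - m"]) (auto intro!: derivative_eq_intros)
  next
    have "continuous_on {a..b} f"
      using deriv by (intro DERIV_atLeastAtMost_imp_continuous_on) blast
    then show "continuous_on {a..b} (\<lambda>x. f x - m * x)"
      by (intro continuous_intros)
  qed
  then show ?thesis by (simp add: algebra_simps)
qed

lemma pos_on_atLeast_if_pos_deriv_at_first_zero:
  fixes f f' :: "real \<Rightarrow> real"
  assumes cont: "continuous_on {a..} f" and "0 < f a"
    and first_zero: "\<And>x. a < x \<Longrightarrow> f x = 0 \<Longrightarrow> (\<forall>y\<in>{a..<x}. 0 < f y) \<Longrightarrow>
                       (f has_real_derivative f' x) (at x) \<and> 0 < f' x"
    and "a \<le> x"
  shows "0 < f x"
proof (rule ccontr)
  have zero_before: "\<exists>z\<in>{a..y}. f z = 0" if "a \<le> y" "f y \<le> 0" for y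
    using IVT2'[of f y 0 a] that \<open>0 < f a\<close> continuous_on_subset[OF cont, of "{a..y}"] by auto
  assume "\<not> 0 < f x"
  define Z where "Z = {a..x} \<inter> f -` {0}"
  have "Z \<noteq> {}" using zero_before[of x] \<open>a \<le> x\<close> \<open>\<not> 0 < f x\<close> by (auto simp: Z_def)
  moreover have "closed Z"
    unfolding Z_def using continuous_on_subset[OF cont]
    by (intro continuous_closed_preimage) auto
  moreover have "bdd_below Z" by (auto simp: Z_def)
  ultimately have "Inf Z \<in> Z" by (intro closed_contains_Inf)
  define x0 where "x0 = Inf Z"
  have "f x0 = 0" "a < x0"
    using \<open>Inf Z \<in> Z\<close> \<open>0 < f a\<close> by (auto simp: Z_def x0_def less_eq_real_def)
  have pos_before: "0 < f y" if y: "a \<le> y" "y < x0" for y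
  proof (rule ccontr)
    assume "\<not> 0 < f y"
    then obtain z where "z \<in> {a..y}" "f z = 0" using zero_before y by force
    then have "z \<in> Z" using y \<open>Inf Z \<in> Z\<close> by (auto simp: Z_def x0_def)
    then have "x0 \<le> z" unfolding x0_def using \<open>bdd_below Z\<close> by (rule cInf_lower)
    with \<open>z \<in> {a..y}\<close> \<open>y < x0\<close> show False by simp
  qed
  then have "(f has_real_derivative f' x0) (at x0)" "0 < f' x0"
    using first_zero[OF \<open>a < x0\<close> \<open>f x0 = 0\<close>] by auto
  then obtain d where "0 < d" and left: "\<And>h. 0 < h \<Longrightarrow> h < d \<Longrightarrow> f (x0 - h) < f x0"
    using DERIV_pos_inc_left by blast
  define h where "h = min (d / 2) (x0 - a)"
  have "f (x0 - h) < 0" using left[of h] \<open>0 < d\<close> \<open>a < x0\<close> \<open>f x0 = 0\<close> by (simp add: h_def)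
  moreover have "0 < f (x0 - h)" using pos_before[of "x0 - h"] \<open>0 < d\<close> \<open>a < x0\<close> by (simp add: h_def)
  ultimately show False by simp
qed

lemma above_persists_if_deriv_pos_below:
  fixes h k k' :: "real \<Rightarrow> real"
  assumes h_dec: "strict_antimono_on {\<kappa>..} h" and h_cont: "continuous_on {\<kappa>..} h"
    and k_deriv: "\<And>x. \<kappa> \<le> x \<Longrightarrow> (k has_real_derivative k' x) (at x)"
    and k'_pos: "\<And>x. \<kappa> \<le> x \<Longrightarrow> k x \<le> h x \<Longrightarrow> 0 < k' x"
    and "\<kappa> \<le> a" "a < b" "h a \<le> k a"
  shows "h b < k b"
proof -
  have k_cont: "continuous_on {\<kappa>..} k"
    unfolding continuous_on_eq_continuous_within
    using k_deriv by (meson DERIV_isCont atLeast_iff continuous_at_imp_continuous_at_within)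
  have h_less: "h y < h x" if "\<kappa> \<le> x" "x < y" for x y
    using monotone_onD[OF h_dec, of x y] that by auto
  have weak: "h y \<le> k y" if "a \<le> y" for y
  proof (rule ccontr)
    assume "\<not> h y \<le> k y"
    define T where "T = {a..y} \<inter> (\<lambda>x. k x - h x) -` {0..}"
    have "a \<in> T" using \<open>h a \<le> k a\<close> that by (simp add: T_def)
    moreover have "closed T"
      unfolding T_def using \<open>\<kappa> \<le> a\<close>
      by (intro continuous_closed_preimage continuous_intros continuous_on_subset[OF k_cont]
          continuous_on_subset[OF h_cont]) auto
    moreover have "bdd_above T" by (auto simp: T_def)
    ultimately have "Sup T \<in> T" by (intro closed_contains_Sup) auto
    define m where "m = Sup T"
    have m: "a \<le> m" "m \<le> y" "h m \<le> k m"
      using \<open>Sup T \<in> T\<close> by (auto simp: T_def m_def)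
    have below: "k x < h x" if "m < x" "x \<le> y" for x
    proof (rule ccontr)
      assume "\<not> k x < h x"
      then have "x \<in> T" using that m by (auto simp: T_def)
      then have "x \<le> m" unfolding m_def using \<open>bdd_above T\<close> by (rule cSup_upper)
      with \<open>m < x\<close> show False by simp
    qed
    have "m < y" using m \<open>\<not> h y \<le> k y\<close> by (cases "m = y") auto
    have "k m + 0 * (y - m) \<le> k y"
    proof (rule ge_linear_if_deriv_ge[where f' = k'])
      show "(k has_real_derivative k' x) (at x)" if "m \<le> x" "x \<le> y" for x
        using k_deriv that m \<open>\<kappa> \<le> a\<close> by simp
      show "0 \<le> k' x" if "m < x" "x < y" for x
        using k'_pos[of x] below[of x] that m \<open>\<kappa> \<le> a\<close> by simp
    qed (use \<open>m < y\<close> in simp)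
    moreover have "h y < h m" using h_less m \<open>m < y\<close> \<open>\<kappa> \<le> a\<close> by simp
    ultimately show False using m \<open>\<not> h y \<le> k y\<close> by simp
  qed
  show ?thesis
  proof (rule ccontr)
    assume "\<not> h b < k b"
    then have "k b = h b" using weak[of b] \<open>a < b\<close> by simp
    have "\<kappa> \<le> b" using \<open>\<kappa> \<le> a\<close> \<open>a < b\<close> by simp
    obtain d where "0 < d" and left: "\<And>t. 0 < t \<Longrightarrow> t < d \<Longrightarrow> k (b - t) < k b"
      using DERIV_pos_inc_left[OF k_deriv[OF \<open>\<kappa> \<le> b\<close>] k'_pos[OF \<open>\<kappa> \<le> b\<close>]] \<open>k b = h b\<close>
      by auto
    define t where "t = min (d / 2) (b - a)"
    have t: "0 < t" "t < d" "a \<le> b - t" using \<open>0 < d\<close> \<open>a < b\<close> by (auto simp: t_def)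
    have "k (b - t) < h (b - t)"
      using left[OF t(1,2)] h_less[of "b - t" b] t \<open>\<kappa> \<le> a\<close> \<open>k b = h b\<close> by simp
    with weak[OF t(3)] show False by simp
  qed
qed

lemma exists_above_if_deriv_ge_below:
  fixes h k k' :: "real \<Rightarrow> real"
  assumes "0 < c" and h_dec: "antimono_on {\<kappa>..} h"
    and k_deriv: "\<And>x. \<kappa> \<le> x \<Longrightarrow> (k has_real_derivative k' x) (at x)"
    and k'_ge: "\<And>x. \<kappa> \<le> x \<Longrightarrow> k x \<le> h x \<Longrightarrow> c \<le> k' x"
  shows "\<exists>x\<ge>\<kappa>. h x \<le> k x"
proof (rule ccontr)
  assume "\<not> (\<exists>x\<ge>\<kappa>. h x \<le> k x)"
  then have below: "k x < h x" if "\<kappa> \<le> x" for x using that by force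
  define X where "X = \<kappa> + (h \<kappa> - k \<kappa>) / c"
  have "\<kappa> \<le> X" using below[of \<kappa>] \<open>0 < c\<close> by (simp add: X_def)
  have "k \<kappa> + c * (X - \<kappa>) \<le> k X"
  proof (rule ge_linear_if_deriv_ge[where f' = k'])
    show "c \<le> k' x" if "\<kappa> < x" "x < X" for x
      using k'_ge[of x] below[of x] that by simp
  qed (use \<open>\<kappa> \<le> X\<close> k_deriv in auto)
  then have "h \<kappa> \<le> k X" using \<open>0 < c\<close> by (simp add: X_def)
  moreover have "h X \<le> h \<kappa>" using monotone_onD[OF h_dec, of \<kappa> X] \<open>\<kappa> \<le> X\<close> by simp
  ultimately show False using below[OF \<open>\<kappa> \<le> X\<close>] by simp
qed

lemma crossing_point_exists:
  fixes h k k' :: "real \<Rightarrow> real"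
  assumes "0 < c"
    and h_dec: "strict_antimono_on {\<kappa>..} h" and h_cont: "continuous_on {\<kappa>..} h"
    and k_deriv: "\<And>x. \<kappa> \<le> x \<Longrightarrow> (k has_real_derivative k' x) (at x)"
    and k'_ge: "\<And>x. \<kappa> \<le> x \<Longrightarrow> k x \<le> h x \<Longrightarrow> c \<le> k' x"
  shows "\<exists>b\<ge>\<kappa>. (\<forall>x. \<kappa> < x \<and> x < b \<longrightarrow> k x < h x) \<and> (\<forall>x>b. h x < k x)"
proof -
  define S where "S = {x. \<kappa> \<le> x \<and> h x \<le> k x}"
  have "antimono_on {\<kappa>..} h"
    using h_dec by (auto simp: monotone_on_def less_eq_real_def)
  then have "S \<noteq> {}"
    using exists_above_if_deriv_ge_below[OF \<open>0 < c\<close> _ k_deriv k'_ge] by (auto simp: S_def)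
  have "bdd_below S" by (auto simp: S_def intro: bdd_belowI)
  define b where "b = Inf S"
  have "\<kappa> \<le> b" unfolding b_def using \<open>S \<noteq> {}\<close> by (rule cInf_greatest) (auto simp: S_def)
  moreover have "k x < h x" if "\<kappa> < x" "x < b" for x
  proof (rule ccontr)
    assume "\<not> k x < h x"
    then have "x \<in> S" using that by (auto simp: S_def)
    then have "b \<le> x" unfolding b_def using \<open>bdd_below S\<close> by (rule cInf_lower)
    with \<open>x < b\<close> show False by simp
  qed
  moreover have "h x < k x" if "b < x" for x
  proof -
    obtain s where "s \<in> S" "s < x" using cInf_lessD[OF \<open>S \<noteq> {}\<close>] \<open>b < x\<close> by (auto simp: b_def)
    then show ?thesis
      using above_persists_if_deriv_pos_below[OF h_dec h_cont k_deriv, of s x] k'_ge \<open>0 < c\<close>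
      by (force simp: S_def)
  qed
  ultimately show ?thesis by blast
qed

lemma ex1_sign_change_point:
  fixes f :: "real \<Rightarrow> real"
  assumes "\<exists>b\<ge>\<kappa>. (\<forall>x. \<kappa> < x \<and> x < b \<longrightarrow> f x < 0) \<and> (\<forall>x>b. 0 < f x)"
  shows "\<exists>!b. b \<ge> \<kappa> \<and> (\<forall>x. \<kappa> < x \<and> x < b \<longrightarrow> f x < 0) \<and> (\<forall>x. x > b \<longrightarrow> f x > 0)"
proof -
  have le: "b' \<le> b" if "\<kappa> \<le> b" "\<forall>x. \<kappa> < x \<and> x < b' \<longrightarrow> f x < 0" "\<forall>x>b. 0 < f x" for b b'
  proof (rule ccontr)
    assume "\<not> b' \<le> b"
    then show False using that(1) that(2,3)[rule_format, of "(b + b') / 2"] by auto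
  qed
  from assms show ?thesis by (auto intro: order.antisym le)
qed

lemma lipschitz_on_atLeast_0_le_linear:
  fixes g :: "real \<Rightarrow> real"
  assumes "L-lipschitz_on {0..} g" and "1 \<le> x"
  shows "g x \<le> (\<bar>g 0\<bar> + L) * x"
proof -
  have "\<bar>g x - g 0\<bar> \<le> L * x"
    using lipschitz_onD[OF assms(1), of x 0] \<open>1 \<le> x\<close> by (simp add: dist_real_def)
  moreover have "\<bar>g 0\<bar> \<le> \<bar>g 0\<bar> * x" using \<open>1 \<le> x\<close> by (simp add: mult_le_cancel_left1)
  ultimately show ?thesis by (simp add: algebra_simps abs_le_iff)
qed

lemma filterlim_at_top_if_deriv_ge_inverse:
  fixes f f' :: "real \<Rightarrow> real"
  assumes "0 < D"
    and "eventually (\<lambda>x. (f has_real_derivative f' x) (at x) \<and> D / x \<le> f' x) at_top"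
  shows "filterlim f at_top at_top"
proof -
  obtain X where "0 < X" and X: "\<And>x. X \<le> x \<Longrightarrow> (f has_real_derivative f' x) (at x) \<and> D / x \<le> f' x"
    using eventually_conj[OF assms(2) eventually_gt_at_top[of 0]]
    unfolding eventually_at_top_linorder by (metis order.refl)
  have "f X - D * ln X + D * ln x \<le> f x" if "X \<le> x" for x
  proof -
    have "(f X - D * ln X) + 0 * (x - X) \<le> f x - D * ln x"
    proof (rule ge_linear_if_deriv_ge[where f' = "\<lambda>x. f' x - D / x"])
      show "((\<lambda>x. f x - D * ln x) has_real_derivative f' x - D / x) (at x)" if "X \<le> x" for x
        using X[OF that] \<open>0 < X\<close> that by (auto intro!: derivative_eq_intros)
    qed (use X that in auto)
    then show ?thesis by simp
  qed
  moreover have "filterlim (\<lambda>x. (f X - D * ln X) + D * ln x) at_top at_top"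
    by (intro filterlim_tendsto_add_at_top[OF tendsto_const]
        filterlim_tendsto_pos_mult_at_top[OF tendsto_const \<open>0 < D\<close> ln_at_top])
  ultimately show ?thesis
    by (elim filterlim_at_top_mono) (auto simp: eventually_at_top_linorder)
qed

lemma tendsto_ident_div_0_if_deriv_at_top:
  fixes f f' :: "real \<Rightarrow> real"
  assumes deriv: "eventually (\<lambda>x. (f has_real_derivative f' x) (at x)) at_top"
    and f'_lim: "filterlim f' at_top at_top"
  shows "((\<lambda>x. x / f x) \<longlongrightarrow> 0) at_top"
proof (rule lhospital_at_top_at_top[where f' = "\<lambda>_. 1" and g' = f'])
  have "eventually (\<lambda>x. 1 \<le> f' x) at_top" using f'_lim by (simp add: filterlim_at_top)
  with deriv eventually_ge_at_top[of 1]
  have "eventually (\<lambda>x. (f has_real_derivative f' x) (at x) \<and> 1 / x \<le> f' x) at_top"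
  proof eventually_elim
    case (elim x)
    then have "1 / x \<le> 1" by simp
    with elim show ?case by linarith
  qed
  then show "filterlim f at_top at_top"
    by (rule filterlim_at_top_if_deriv_ge_inverse[OF zero_less_one])
  show "eventually (\<lambda>x. f' x \<noteq> 0) at_top"
    using f'_lim unfolding filterlim_at_top_dense by (auto elim!: allE[of _ 0] eventually_mono)
  show "eventually (\<lambda>x. ((\<lambda>x. x) has_real_derivative 1) (at x)) at_top" by simp
  show "((\<lambda>x. 1 / f' x) \<longlongrightarrow> 0) at_top"
    using tendsto_inverse_0_at_top[OF f'_lim] by (simp add: inverse_eq_divide)
qed (rule deriv)

lemma div_deriv_ge_if_deriv_bounded:
  fixes f f' :: "real \<Rightarrow> real"
  assumes deriv: "\<And>x. B \<le> x \<Longrightarrow> (f has_real_derivative f' x) (at x)"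
    and mono: "mono_on {B..} f'" and bounded: "\<And>x. B \<le> x \<Longrightarrow> f' x \<le> M"
    and nonneg: "\<And>x. B \<le> x \<Longrightarrow> 0 \<le> f x" and "0 < f' B" and "0 < \<epsilon>"
  shows "\<exists>x\<^sub>1\<ge>B. \<forall>x\<ge>x\<^sub>1. (1 - \<epsilon>) * (x - x\<^sub>1) \<le> f x / f' x"
proof -
  define L where "L = Sup (f' ` {B..})"
  have "bdd_above (f' ` {B..})" using bounded by (intro bdd_aboveI[of _ M]) auto
  then have le_L: "f' x \<le> L" if "B \<le> x" for x
    unfolding L_def using that by (auto intro: cSup_upper)
  have "0 < L" using le_L[of B] \<open>0 < f' B\<close> by simp
  then have "(1 - \<epsilon>) * L < L" using \<open>0 < \<epsilon>\<close> by simp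
  then obtain x\<^sub>1 where "B \<le> x\<^sub>1" and x\<^sub>1: "(1 - \<epsilon>) * L < f' x\<^sub>1"
    using less_cSupE[of "(1 - \<epsilon>) * L" "f' ` {B..}"] unfolding L_def by auto
  have "(1 - \<epsilon>) * (x - x\<^sub>1) \<le> f x / f' x" if "x\<^sub>1 \<le> x" for x
  proof -
    have "f x\<^sub>1 + f' x\<^sub>1 * (x - x\<^sub>1) \<le> f x"
      using that \<open>B \<le> x\<^sub>1\<close> deriv mono_onD[OF mono, of x\<^sub>1]
      by (intro ge_linear_if_deriv_ge[where f' = f']) auto
    moreover have "(1 - \<epsilon>) * L * (x - x\<^sub>1) \<le> f' x\<^sub>1 * (x - x\<^sub>1)"
      using x\<^sub>1 that by (intro mult_right_mono) auto
    ultimately have "(1 - \<epsilon>) * L * (x - x\<^sub>1) \<le> f x"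
      using nonneg[OF \<open>B \<le> x\<^sub>1\<close>] by simp
    then have "(1 - \<epsilon>) * (x - x\<^sub>1) \<le> f x / L" using \<open>0 < L\<close> by (simp add: field_simps)
    also have "\<dots> \<le> f x / f' x"
      using nonneg le_L mono_onD[OF mono, of B x] \<open>0 < f' B\<close> that \<open>B \<le> x\<^sub>1\<close>
      by (intro frac_le) auto
    finally show ?thesis .
  qed
  with \<open>B \<le> x\<^sub>1\<close> show ?thesis by blast
qed

locale increasing_fundamental_solution =
  fixes r \<kappa> c :: real and \<mu> \<sigma> \<psi> \<psi>' \<psi>'' :: "real \<Rightarrow> real"
  assumes r_pos: "0 < r" and kappa_pos: "0 < \<kappa>" and c_pos: "0 < c"
    and mu_cont: "continuous_on {0..} \<mu>"
    and sigma_lip: "\<exists>L. L-lipschitz_on {0..} \<sigma>"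
    and sigma_pos: "\<And>x. 0 \<le> x \<Longrightarrow> 0 < \<sigma> x"
    and drift_dec: "strict_antimono_on {\<kappa>..} (\<lambda>x. \<mu> x - (r - c) * x)"
    and psi_deriv: "\<And>x. 0 \<le> x \<Longrightarrow> (\<psi> has_real_derivative \<psi>' x) (at x within {0..})"
    and psi'_deriv: "\<And>x. 0 \<le> x \<Longrightarrow> (\<psi>' has_real_derivative \<psi>'' x) (at x within {0..})"
    and ode: "\<And>x. 0 \<le> x \<Longrightarrow> (\<sigma> x)\<^sup>2 / 2 * \<psi>'' x + \<mu> x * \<psi>' x = r * \<psi> x"
    and init: "\<psi>' 0 = 1" "\<psi> 0 = 0"
begin

lemma psi_deriv_at: "0 < x \<Longrightarrow> (\<psi> has_real_derivative \<psi>' x) (at x)"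
  using psi_deriv[of x] at_within_interior[of x "{0..}"] by simp

lemma psi'_deriv_at: "0 < x \<Longrightarrow> (\<psi>' has_real_derivative \<psi>'' x) (at x)"
  using psi'_deriv[of x] at_within_interior[of x "{0..}"] by simp

lemma psi_cont: "continuous_on {0..} \<psi>"
  by (rule DERIV_continuous_on[OF psi_deriv]) simp

lemma psi'_cont: "continuous_on {0..} \<psi>'"
  by (rule DERIV_continuous_on[OF psi'_deriv]) simp

lemma psi'_pos: "0 \<le> x \<Longrightarrow> 0 < \<psi>' x"
proof (rule pos_on_atLeast_if_pos_deriv_at_first_zero[OF psi'_cont, where f' = \<psi>''])
  fix x assume "0 < x" "\<psi>' x = 0" and pos_before: "\<forall>y\<in>{0..<x}. 0 < \<psi>' y"
  have "\<psi> 0 < \<psi> x"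
  proof (rule DERIV_pos_imp_increasing_open[OF \<open>0 < x\<close>])
    fix y assume "0 < y" "y < x"
    then show "\<exists>l. (\<psi> has_real_derivative l) (at y) \<and> 0 < l"
      using psi_deriv_at[of y] pos_before by (intro exI[of _ "\<psi>' y"]) auto
  qed (rule continuous_on_subset[OF psi_cont], auto)
  then have "0 < (\<sigma> x)\<^sup>2 / 2 * \<psi>'' x" using ode[of x] \<open>\<psi>' x = 0\<close> init r_pos \<open>0 < x\<close> by simp
  then have "0 < \<psi>'' x" using sigma_pos[of x] \<open>0 < x\<close> by (simp add: zero_less_mult_iff)
  then show "(\<psi>' has_real_derivative \<psi>'' x) (at x) \<and> 0 < \<psi>'' x" using psi'_deriv_at \<open>0 < x\<close> by simp
qed (use init in simp)

lemma psi_nonneg: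
  assumes "0 \<le> x"
  shows "0 \<le> \<psi> x"
proof -
  have "\<psi> 0 \<le> \<psi> x"
  proof (rule DERIV_nonneg_imp_increasing_open[OF assms])
    fix y assume "0 < y" "y < x"
    then show "\<exists>l. (\<psi> has_real_derivative l) (at y) \<and> 0 \<le> l"
      using psi_deriv_at[of y] psi'_pos[of y] by (intro exI[of _ "\<psi>' y"]) auto
  qed (rule continuous_on_subset[OF psi_cont], auto)
  then show ?thesis using init by simp
qed

definition detrended_drift :: "real \<Rightarrow> real"
  where "detrended_drift x = \<mu> x - (r - c) * x"

definition detrended_ratio :: "real \<Rightarrow> real"
  where "detrended_ratio x = r * \<psi> x / \<psi>' x - (r - c) * x"

lemma psi''_eq:
  assumes "0 \<le> x"
  shows "\<psi>'' x = 2 * \<psi>' x / (\<sigma> x)\<^sup>2 * (detrended_ratio x - detrended_drift x)"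
proof -
  have "\<psi>' x * (detrended_ratio x - detrended_drift x) = r * \<psi> x - \<mu> x * \<psi>' x"
    using psi'_pos[OF assms] by (simp add: detrended_ratio_def detrended_drift_def field_simps)
  also have "\<dots> = (\<sigma> x)\<^sup>2 / 2 * \<psi>'' x" using ode[OF assms] by simp
  finally show ?thesis using sigma_pos[OF assms] by (simp add: field_simps)
qed

lemma sgn_psi'': "0 \<le> x \<Longrightarrow> sgn (\<psi>'' x) = sgn (detrended_ratio x - detrended_drift x)"
  using psi''_eq psi'_pos sigma_pos by (simp add: sgn_mult)

lemma detrended_ratio_deriv:
  "0 < x \<Longrightarrow> (detrended_ratio has_real_derivative c - r * \<psi> x * \<psi>'' x / (\<psi>' x)\<^sup>2) (at x)"
  unfolding detrended_ratio_def using psi'_pos[of x]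
  by (auto intro!: derivative_eq_intros psi_deriv_at psi'_deriv_at simp: field_simps power2_eq_square)

lemma inflection_point:
  "\<exists>b\<ge>\<kappa>. (\<forall>x. \<kappa> < x \<and> x < b \<longrightarrow> \<psi>'' x < 0) \<and> (\<forall>x>b. 0 < \<psi>'' x)"
proof -
  have "\<exists>b\<ge>\<kappa>. (\<forall>x. \<kappa> < x \<and> x < b \<longrightarrow> detrended_ratio x < detrended_drift x)
                \<and> (\<forall>x>b. detrended_drift x < detrended_ratio x)"
  proof (rule crossing_point_exists[OF c_pos])
    show "strict_antimono_on {\<kappa>..} detrended_drift"
      using drift_dec by (simp add: detrended_drift_def[abs_def])
    show "continuous_on {\<kappa>..} detrended_drift"
      unfolding detrended_drift_def using kappa_pos
      by (intro continuous_intros continuous_on_subset[OF mu_cont]) auto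
    fix x assume "\<kappa> \<le> x"
    then show "(detrended_ratio has_real_derivative c - r * \<psi> x * \<psi>'' x / (\<psi>' x)\<^sup>2) (at x)"
      using detrended_ratio_deriv kappa_pos by simp
    assume "detrended_ratio x \<le> detrended_drift x"
    then have "sgn (\<psi>'' x) \<le> 0" using sgn_psi''[of x] \<open>\<kappa> \<le> x\<close> kappa_pos by (simp add: sgn_le_0_iff)
    then have "\<psi>'' x \<le> 0" by (simp add: sgn_le_0_iff)
    then show "c \<le> c - r * \<psi> x * \<psi>'' x / (\<psi>' x)\<^sup>2"
      using psi_nonneg[of x] \<open>\<kappa> \<le> x\<close> kappa_pos r_pos
      by (simp add: divide_nonpos_nonneg mult_nonneg_nonpos)
  qed
  then obtain b where "\<kappa> \<le> b"
    and below: "\<forall>x. \<kappa> < x \<and> x < b \<longrightarrow> detrended_ratio x < detrended_drift x"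
    and above: "\<forall>x>b. detrended_drift x < detrended_ratio x"
    by blast
  have "\<psi>'' x < 0" if "\<kappa> < x" "x < b" for x
  proof -
    have "sgn (\<psi>'' x) < 0" using sgn_psi''[of x] below that kappa_pos by simp
    then show ?thesis by simp
  qed
  moreover have "0 < \<psi>'' x" if "b < x" for x
  proof -
    have "0 < sgn (\<psi>'' x)" using sgn_psi''[of x] above that \<open>\<kappa> \<le> b\<close> kappa_pos by simp
    then show ?thesis by simp
  qed
  ultimately show ?thesis using \<open>\<kappa> \<le> b\<close> by blast
qed

lemma detrended_drift_antimono: "\<kappa> \<le> x \<Longrightarrow> x \<le> y \<Longrightarrow> detrended_drift y \<le> detrended_drift x"
  using monotone_onD[OF drift_dec, of x y] by (cases "x = y") (auto simp: detrended_drift_def)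

lemma psi'_mono_eventually: "\<exists>B>0. mono_on {B..} \<psi>'"
proof -
  obtain b where "\<kappa> \<le> b" and convex: "\<forall>x>b. 0 < \<psi>'' x" using inflection_point by blast
  have "\<psi>' x \<le> \<psi>' y" if "b \<le> x" "x \<le> y" for x y
  proof -
    have "\<psi>' x + 0 * (y - x) \<le> \<psi>' y"
    proof (rule ge_linear_if_deriv_ge[where f' = \<psi>''])
      show "(\<psi>' has_real_derivative \<psi>'' t) (at t)" if "x \<le> t" for t
        using psi'_deriv_at[of t] that \<open>b \<le> x\<close> \<open>\<kappa> \<le> b\<close> kappa_pos by simp
    qed (use that convex[rule_format, THEN less_imp_le] in auto)
    then show ?thesis by simp
  qed
  then show ?thesis using \<open>\<kappa> \<le> b\<close> kappa_pos by (intro exI[of _ b]) (auto intro: mono_onI)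
qed

lemma gap_ge_linear_if_psi'_bounded:
  assumes bounded: "\<And>x. B \<le> x \<Longrightarrow> \<psi>' x \<le> M"
  shows "eventually (\<lambda>x. c / 4 * x \<le> detrended_ratio x - detrended_drift x) at_top"
proof -
  obtain B\<^sub>0 where "0 < B\<^sub>0" and mono: "mono_on {B\<^sub>0..} \<psi>'" using psi'_mono_eventually by blast
  define B\<^sub>1 where "B\<^sub>1 = max (max B B\<^sub>0) \<kappa>"
  have B\<^sub>1: "0 < B\<^sub>1" "B \<le> B\<^sub>1" "\<kappa> \<le> B\<^sub>1" "mono_on {B\<^sub>1..} \<psi>'"
    using \<open>0 < B\<^sub>0\<close> mono_on_subset[OF mono] by (auto simp: B\<^sub>1_def)
  obtain x\<^sub>1 where "B\<^sub>1 \<le> x\<^sub>1" and ratio: "\<forall>x\<ge>x\<^sub>1. (1 - c / (2 * r)) * (x - x\<^sub>1) \<le> \<psi> x / \<psi>' x"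
    using div_deriv_ge_if_deriv_bounded[of B\<^sub>1 \<psi> \<psi>' M "c / (2 * r)"] B\<^sub>1 bounded
      psi_deriv_at psi_nonneg psi'_pos c_pos r_pos
    by auto
  define C where "C = (r - c / 2) * x\<^sub>1 + detrended_drift B\<^sub>1"
  have gap_ge: "c / 2 * x - C \<le> detrended_ratio x - detrended_drift x" if "x\<^sub>1 \<le> x" for x
  proof -
    have "(r - c / 2) * (x - x\<^sub>1) = r * ((1 - c / (2 * r)) * (x - x\<^sub>1))"
      using r_pos by (simp add: field_simps)
    also have "\<dots> \<le> r * (\<psi> x / \<psi>' x)"
      using ratio that r_pos by (intro mult_left_mono) auto
    finally have "(r - c / 2) * (x - x\<^sub>1) \<le> r * \<psi> x / \<psi>' x" by simp
    moreover have "detrended_drift x \<le> detrended_drift B\<^sub>1"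
      using detrended_drift_antimono B\<^sub>1 \<open>B\<^sub>1 \<le> x\<^sub>1\<close> that by simp
    moreover have "c / 2 * x - C = (r - c / 2) * (x - x\<^sub>1) - (r - c) * x - detrended_drift B\<^sub>1"
      by (simp add: C_def field_simps)
    ultimately show ?thesis by (simp add: detrended_ratio_def)
  qed
  have quarter: "c / 4 * x \<le> c / 2 * x - C" if "4 * \<bar>C\<bar> / c \<le> x" for x
    using that c_pos by (simp add: field_simps)
  show ?thesis
    unfolding eventually_at_top_linorder
  proof (intro exI[of _ "max x\<^sub>1 (4 * \<bar>C\<bar> / c)"] allI impI)
    fix x assume "max x\<^sub>1 (4 * \<bar>C\<bar> / c) \<le> x"
    then show "c / 4 * x \<le> detrended_ratio x - detrended_drift x"
      using gap_ge[of x] quarter[of x] by simp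
  qed
qed

lemma psi''_ge_inverse_if_psi'_bounded:
  assumes "\<And>x. B \<le> x \<Longrightarrow> \<psi>' x \<le> M"
  shows "\<exists>D>0. eventually (\<lambda>x. D / x \<le> \<psi>'' x) at_top"
proof -
  have gap: "eventually (\<lambda>x. c / 4 * x \<le> detrended_ratio x - detrended_drift x) at_top"
    using assms by (rule gap_ge_linear_if_psi'_bounded)
  obtain L where L: "L-lipschitz_on {0..} \<sigma>" using sigma_lip by blast
  define A where "A = \<bar>\<sigma> 0\<bar> + L"
  have "0 < A" using sigma_pos[of 0] lipschitz_on_nonneg[OF L] by (simp add: A_def)
  obtain B\<^sub>0 where "0 < B\<^sub>0" and mono: "mono_on {B\<^sub>0..} \<psi>'" using psi'_mono_eventually by blast
  define D where "D = \<psi>' B\<^sub>0 * c / (2 * A\<^sup>2)"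
  have "0 < D" using psi'_pos[of B\<^sub>0] \<open>0 < B\<^sub>0\<close> c_pos \<open>0 < A\<close> by (simp add: D_def)
  moreover have "eventually (\<lambda>x. D / x \<le> \<psi>'' x) at_top"
    using gap eventually_ge_at_top[of "max 1 B\<^sub>0"]
  proof eventually_elim
    case (elim x)
    then have "1 \<le> x" "B\<^sub>0 \<le> x" by auto
    have "0 < \<sigma> x" "\<sigma> x \<le> A * x"
      using sigma_pos lipschitz_on_atLeast_0_le_linear[OF L \<open>1 \<le> x\<close>] \<open>1 \<le> x\<close> by (auto simp: A_def)
    have "D / x = 2 * \<psi>' B\<^sub>0 / (A * x)\<^sup>2 * (c / 4 * x)"
      using \<open>1 \<le> x\<close> \<open>0 < A\<close> by (simp add: D_def field_simps power2_eq_square)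
    also have "\<dots> \<le> 2 * \<psi>' x / (\<sigma> x)\<^sup>2 * (detrended_ratio x - detrended_drift x)"
      using elim \<open>0 < \<sigma> x\<close> \<open>\<sigma> x \<le> A * x\<close> \<open>B\<^sub>0 \<le> x\<close> \<open>0 < B\<^sub>0\<close> \<open>1 \<le> x\<close>
        mono_onD[OF mono, of B\<^sub>0 x] psi'_pos[of B\<^sub>0] c_pos
      by (intro mult_mono frac_le power_mono) auto
    also have "\<dots> = \<psi>'' x" using psi''_eq \<open>1 \<le> x\<close> by simp
    finally show ?case .
  qed
  ultimately show ?thesis by blast
qed

lemma psi'_tendsto_at_top: "filterlim \<psi>' at_top at_top"
  unfolding filterlim_at_top
proof
  fix M
  obtain B where "0 < B" and mono: "mono_on {B..} \<psi>'" using psi'_mono_eventually by blast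
  show "eventually (\<lambda>x. M \<le> \<psi>' x) at_top"
  proof (rule ccontr)
    assume not_eventually: "\<not> eventually (\<lambda>x. M \<le> \<psi>' x) at_top"
    have "\<psi>' x \<le> M" if "B \<le> x" for x
    proof (rule ccontr)
      assume "\<not> \<psi>' x \<le> M"
      then have "\<forall>y\<ge>x. M \<le> \<psi>' y" using mono_onD[OF mono, of x] that by force
      with not_eventually show False by (auto simp: eventually_at_top_linorder)
    qed
    then obtain D where "0 < D" and convex: "eventually (\<lambda>x. D / x \<le> \<psi>'' x) at_top"
      using psi''_ge_inverse_if_psi'_bounded by blast
    from convex eventually_gt_at_top[of 0]
    have "eventually (\<lambda>x. (\<psi>' has_real_derivative \<psi>'' x) (at x) \<and> D / x \<le> \<psi>'' x) at_top"
      by eventually_elim (use psi'_deriv_at in auto)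
    then have "filterlim \<psi>' at_top at_top"
      by (rule filterlim_at_top_if_deriv_ge_inverse[OF \<open>0 < D\<close>])
    with not_eventually show False by (simp add: filterlim_at_top)
  qed
qed

lemma ident_div_psi_tendsto_0: "((\<lambda>x. x / \<psi> x) \<longlongrightarrow> 0) at_top"
proof (rule tendsto_ident_div_0_if_deriv_at_top[OF _ psi'_tendsto_at_top])
  show "eventually (\<lambda>x. (\<psi> has_real_derivative \<psi>' x) (at x)) at_top"
    using eventually_gt_at_top[of 0] by (rule eventually_mono) (rule psi_deriv_at)
qed

end

theorem lemmaA1:
  fixes r \<kappa> c :: real
    and \<mu> \<sigma> \<psi> \<psi>' \<psi>'' :: "real \<Rightarrow> real"
  assumes r_pos: "r > 0"
    and mu_lip: "\<exists>L. L-lipschitz_on {0..} \<mu>"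
    and sigma_lip: "\<exists>L. L-lipschitz_on {0..} \<sigma>"
    and sigma_pos: "\<And>x. x \<ge> 0 \<Longrightarrow> \<sigma> x > 0"
    and kappa_pos: "\<kappa> > 0" and c_pos: "c > 0"
    and strict_dec: "strict_antimono_on {\<kappa>..} (\<lambda>x. \<mu> x - (r - c) * x)"
    and d1: "\<And>x. x \<ge> 0 \<Longrightarrow> (\<psi> has_real_derivative \<psi>' x) (at x within {0..})"
    and d2: "\<And>x. x \<ge> 0 \<Longrightarrow> (\<psi>' has_real_derivative \<psi>'' x) (at x within {0..})"
    and d2_cont: "continuous_on {0..} \<psi>''"
    and ode: "\<And>x. x \<ge> 0 \<Longrightarrow> (\<sigma> x)\<^sup>2 / 2 * \<psi>'' x + \<mu> x * \<psi>' x = r * \<psi> x"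
    and init: "\<psi>' 0 = 1" "\<psi> 0 = 0"
    and incr: "mono_on {0..} \<psi>"
  shows "(\<forall>x \<ge> 0. \<psi>' x > 0)
       \<and> (\<exists>!b1. b1 \<ge> \<kappa> \<and> (\<forall>x. \<kappa> < x \<and> x < b1 \<longrightarrow> \<psi>'' x < 0)
                          \<and> (\<forall>x. x > b1 \<longrightarrow> \<psi>'' x > 0))
       \<and> (\<lambda>n::nat. real n / \<psi> (real n)) \<longlonglongrightarrow> 0"
proof -
  have "continuous_on {0..} \<mu>" using mu_lip lipschitz_on_continuous_on by blast
  then interpret increasing_fundamental_solution r \<kappa> c \<mu> \<sigma> \<psi> \<psi>' \<psi>''
    by unfold_locales (use assms in auto)
  have "(\<lambda>n. real n / \<psi> (real n)) \<longlonglongrightarrow> 0"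
    by (rule filterlim_compose[OF ident_div_psi_tendsto_0 filterlim_real_sequentially])
  then show ?thesis using psi'_pos ex1_sign_change_point[OF inflection_point] by blast
qed

end
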